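(* Let $L$ be a sublattice of $A_n$ of rank $n$. The boundary of $\Sigma^c(L)$ in $\mathbb R^{n+1}$ equals the lower graph of $h_{\triangle,L}$: $$\partial\Sigma^c(L)=\{\,y-h_{\triangle,L}(y)(1,\dots,1): y\in H_0\,\}.$$
   Context: Let $n\ge 1$, $H_0=\{x\in\mathbb R^{n+1}:\sum_i x_i=0\}$ and $A_n=H_0\cap\mathbb Z^{n+1}$. Write $x\le y$ iff $x_i\le y_i$ for all $i$. Let $\Sigma^{\mathbb R}(L)=\{x\in\mathbb R^{n+1}: x\not\le q\text{ for all }q\in L\}$ and let $\Sigma^c(L)$ be its topological closure in $\mathbb R^{n+1}$. For $p,q\in H_0$ let $d_\triangle(p,q)=\max_i(p_i-q_i)$, and for $x\in H_0$ let $h_{\triangle,L}(x)=\min_{p\in L}d_\triangle(x,p)$. *)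

theory Defs
  imports "HOL-Analysis.Analysis"
begin

text \<open>Points of R^(n+1) are modelled as real^'n with CARD('n) = n+1.\<close>

definition H0 :: "(real^'n) set" where
  "H0 = {x. (\<Sum>i\<in>UNIV. x$i) = 0}"

definition A_lat :: "(real^'n) set" where
  "A_lat = {x \<in> H0. \<forall>i. x$i \<in> \<int>}"

definition sublattice_A :: "(real^'n) set \<Rightarrow> bool" where
  "sublattice_A L \<longleftrightarrow> L \<subseteq> A_lat \<and> 0 \<in> L \<and> (\<forall>p\<in>L. \<forall>q\<in>L. p - q \<in> L)"

definition Sigma_R :: "(real^'n) set \<Rightarrow> (real^'n) set" where
  "Sigma_R L = {x. \<forall>q\<in>L. \<not> (\<forall>i. x$i \<le> q$i)}"

definition Sigma_c :: "(real^'n) set \<Rightarrow> (real^'n) set" where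
  "Sigma_c L = closure (Sigma_R L)"

definition d_tri :: "real^'n \<Rightarrow> real^'n \<Rightarrow> real" where
  "d_tri p q = Max (range (\<lambda>i. p$i - q$i))"

definition h_tri :: "(real^'n) set \<Rightarrow> real^'n \<Rightarrow> real" where
  "h_tri L x = Inf ((\<lambda>p. d_tri x p) ` L)"

end

theory Submission
  imports Defs
begin

(* Write 1 for the all-ones vector.  The function h = h_tri L is
   (i) equivariant along 1, h (x + c*1) = h x + c, because d_tri has this property
   in its first argument, and (ii) 1-Lipschitz, hence continuous; it is finite
   because points of L lie in H0, which bounds d_tri x p below by the mean of x.
   A point x lies outside Sigma_R L iff x <= q for some q in L, i.e. iff
   d_tri x q <= 0 for some q in L; therefore Sigma_R L is squeezed between the
   level sets {h > 0} and {h >= 0}.  A general topological lemma shows that for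
   a continuous function strictly increasing along a direction, any set squeezed
   like this has closure {h >= 0} and that closure has frontier {h = 0}.
   Finally, translating along 1 identifies the zero set {h = 0} with the lower
   graph {y - h y * 1 | y in H0}, since every point is uniquely y + c*1, y in H0. *)

definition ones :: "real^'n" where "ones = (\<chi> i. 1)"

lemma d_tri_ge: "p$i - q$i \<le> d_tri p q"
  unfolding d_tri_def by (intro Max_ge) auto

lemma d_tri_attained: "\<exists>i. d_tri p q = p$i - q$i"
proof -
  have "d_tri p q \<in> range (\<lambda>i. p$i - q$i)" unfolding d_tri_def by (intro Max_in) auto
  then show ?thesis by auto
qed

lemma d_tri_nonpos_iff: "d_tri x q \<le> 0 \<longleftrightarrow> (\<forall>i. x$i \<le> q$i)"
proof
  assume "d_tri x q \<le> 0"
  then show "\<forall>i. x$i \<le> q$i" using d_tri_ge[of x _ q] by (meson diff_le_0_iff_le order_trans)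
next
  assume "\<forall>i. x$i \<le> q$i"
  moreover obtain i where "d_tri x q = x$i - q$i" using d_tri_attained by blast
  ultimately show "d_tri x q \<le> 0" by simp
qed

lemma d_tri_shift: "d_tri (x + c *\<^sub>R ones) p = d_tri x p + c"
proof -
  obtain i where i: "d_tri (x + c *\<^sub>R ones) p = (x + c *\<^sub>R ones)$i - p$i"
    using d_tri_attained by blast
  obtain j where j: "d_tri x p = x$j - p$j" using d_tri_attained by blast
  have "(x + c *\<^sub>R ones)$j - p$j \<le> d_tri (x + c *\<^sub>R ones) p" by (rule d_tri_ge)
  moreover have "x$i - p$i \<le> d_tri x p" by (rule d_tri_ge)
  ultimately show ?thesis using i j by (simp add: ones_def)
qed

lemma d_tri_lipschitz: "d_tri x p \<le> d_tri x' p + norm (x - x')"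
proof -
  obtain i where i: "d_tri x p = x$i - p$i" using d_tri_attained by blast
  have "\<bar>(x - x')$i\<bar> \<le> norm (x - x')" by (rule component_le_norm_cart)
  moreover have "x'$i - p$i \<le> d_tri x' p" by (rule d_tri_ge)
  ultimately show ?thesis using i by auto
qed

lemma d_tri_ge_mean:
  assumes "p \<in> H0"
  shows "(\<Sum>i\<in>UNIV. x$i) / CARD('n) \<le> d_tri x (p::real^'n)"
proof -
  have "(\<Sum>i\<in>UNIV. x$i) = (\<Sum>i\<in>UNIV. x$i - p$i)"
    using assms by (simp add: sum_subtractf H0_def)
  also have "\<dots> \<le> (\<Sum>i\<in>(UNIV::'n set). d_tri x p)"
    by (intro sum_mono) (rule d_tri_ge)
  finally show ?thesis by (simp add: divide_le_eq mult.commute)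
qed

lemma frontier_closure_squeezed:
  fixes h :: "'a::real_normed_vector \<Rightarrow> real"
  assumes cont: "continuous_on UNIV h"
    and shift: "\<And>x c. h (x + c *\<^sub>R v) = h x + c"
    and lower: "{x. 0 < h x} \<subseteq> S" and upper: "S \<subseteq> {x. 0 \<le> h x}"
  shows "frontier (closure S) = {x. h x = 0}"
proof -
  have step_pos: "e / (norm v + 1) > 0" if "e > 0" for e :: real
    using that by (simp add: add_nonneg_pos)
  have step_small: "norm ((e / (norm v + 1)) *\<^sub>R v) < e" if "e > 0" for e :: real
  proof -
    have pos: "norm v + 1 > 0" by (simp add: add_nonneg_pos)
    then have "\<bar>e / (norm v + 1)\<bar> = e / (norm v + 1)"
      using that by simp
    then have "norm ((e / (norm v + 1)) *\<^sub>R v) = e * (norm v / (norm v + 1))"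
      unfolding norm_scaleR by auto
    also have "\<dots> < e * 1"
      using that pos by (intro mult_strict_left_mono) (simp_all add: divide_less_eq)
    finally show ?thesis by simp
  qed
  have closed_ge: "closed {x. 0 \<le> h x}"
    using cont by (intro closed_Collect_le) (auto intro: continuous_intros)
  have closure_S: "closure S = {x. 0 \<le> h x}"
  proof
    show "closure S \<subseteq> {x. 0 \<le> h x}" using closure_minimal[OF upper closed_ge] .
  next
    show "{x. 0 \<le> h x} \<subseteq> closure S"
    proof (clarify, rule iffD2[OF closure_approachable], intro allI impI)
      fix x and e :: real assume hx: "0 \<le> h x" and e: "e > 0"
      define c where "c = e / (norm v + 1)"
      have "c > 0" using step_pos[OF e] by (simp add: c_def)
      then have "x + c *\<^sub>R v \<in> S" using lower hx shift[of x c] by auto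
      moreover have "dist (x + c *\<^sub>R v) x < e" using step_small[OF e] by (simp add: c_def dist_norm)
      ultimately show "\<exists>y\<in>S. dist y x < e" by blast
    qed
  qed
  have interior_ge: "interior {x. 0 \<le> h x} = {x. 0 < h x}"
  proof
    have "open {x. 0 < h x}"
      using cont by (intro open_Collect_less) (auto intro: continuous_intros)
    then show "{x. 0 < h x} \<subseteq> interior {x. 0 \<le> h x}" by (intro interior_maximal) auto
  next
    show "interior {x. 0 \<le> h x} \<subseteq> {x. 0 < h x}"
    proof (rule subsetI, rule ccontr)
      fix x assume x: "x \<in> interior {x. 0 \<le> h x}" and "x \<notin> {x. 0 < h x}"
      then have hx: "h x = 0" using interior_subset by fastforce
      obtain e where e: "e > 0" "ball x e \<subseteq> {x. 0 \<le> h x}" using x by (meson mem_interior)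
      define c where "c = e / (norm v + 1)"
      have "c > 0" using step_pos[OF e(1)] by (simp add: c_def)
      have "dist x (x + (- c) *\<^sub>R v) < e" using step_small[OF e(1)] by (simp add: c_def dist_norm)
      then have "x + (- c) *\<^sub>R v \<in> ball x e" by (simp only: mem_ball)
      then have "0 \<le> h (x + (- c) *\<^sub>R v)" using e(2) by blast
      then show False using shift[of x "- c"] hx \<open>c > 0\<close> by simp
    qed
  qed
  show ?thesis
    unfolding frontier_def closure_closure closure_S interior_ge closure_closed[OF closed_ge] by auto
qed

text \<open>All that the boundary description needs about L: it is a nonempty subset of
  H0, so that the infimum defining h_tri L is over a nonempty set bounded below.\<close>
locale subset_of_H0 =
  fixes L :: "(real^'n) set"
  assumes nonempty: "L \<noteq> {}" and in_H0: "L \<subseteq> H0"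
begin

lemma h_tri_le: "p \<in> L \<Longrightarrow> h_tri L x \<le> d_tri x p"
  unfolding h_tri_def
  by (rule cInf_lower) (use d_tri_ge_mean in_H0 in \<open>auto simp: bdd_below_def\<close>)

lemma h_tri_greatest: "(\<And>p. p \<in> L \<Longrightarrow> a \<le> d_tri x p) \<Longrightarrow> a \<le> h_tri L x"
  unfolding h_tri_def using nonempty by (intro cInf_greatest) auto

lemma h_tri_shift: "h_tri L (x + c *\<^sub>R ones) = h_tri L x + c"
proof -
  have "h_tri L (x + c *\<^sub>R ones) - c \<le> h_tri L x"
  proof (rule h_tri_greatest)
    fix p assume "p \<in> L"
    then show "h_tri L (x + c *\<^sub>R ones) - c \<le> d_tri x p"
      using h_tri_le[of p "x + c *\<^sub>R ones"] by (simp add: d_tri_shift)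
  qed
  moreover have "h_tri L x + c \<le> h_tri L (x + c *\<^sub>R ones)"
  proof (rule h_tri_greatest)
    fix p assume "p \<in> L"
    then show "h_tri L x + c \<le> d_tri (x + c *\<^sub>R ones) p"
      using h_tri_le[of p x] by (simp add: d_tri_shift)
  qed
  ultimately show ?thesis by linarith
qed

lemma h_tri_continuous: "continuous_on UNIV (h_tri L)"
proof -
  have lip: "h_tri L x \<le> h_tri L x' + norm (x - x')" for x x'
  proof -
    have "h_tri L x - norm (x - x') \<le> h_tri L x'"
    proof (rule h_tri_greatest)
      fix p assume "p \<in> L"
      then show "h_tri L x - norm (x - x') \<le> d_tri x' p"
        using h_tri_le[of p x] d_tri_lipschitz[of x p x'] by linarith
    qed
    then show ?thesis by linarith
  qed
  have "1-lipschitz_on UNIV (h_tri L)"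
  proof (rule lipschitz_onI)
    fix x y :: "real^'n"
    show "dist (h_tri L x) (h_tri L y) \<le> 1 * dist x y"
      using lip[of x y] lip[of y x] norm_minus_commute[of x y]
      by (simp add: dist_real_def dist_norm abs_le_iff)
  qed simp
  then show ?thesis by (rule lipschitz_on_continuous_on)
qed

lemma Sigma_R_contains_pos: "{x. 0 < h_tri L x} \<subseteq> Sigma_R L"
proof (clarify, unfold Sigma_R_def, clarify)
  fix x q assume "0 < h_tri L x" "q \<in> L" "\<forall>i. x$i \<le> q$i"
  then have "d_tri x q \<le> 0" using d_tri_nonpos_iff by blast
  then show False using h_tri_le[OF \<open>q \<in> L\<close>, of x] \<open>0 < h_tri L x\<close> by linarith
qed

lemma Sigma_R_within_nonneg: "Sigma_R L \<subseteq> {x. 0 \<le> h_tri L x}"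
proof (rule subsetI, rule ccontr)
  fix x assume x: "x \<in> Sigma_R L" and "x \<notin> {x. 0 \<le> h_tri L x}"
  then have "h_tri L x < 0" by simp
  then obtain q where "q \<in> L" "d_tri x q < 0"
    unfolding h_tri_def using nonempty cInf_lessD[of "(\<lambda>p. d_tri x p) ` L" 0] by blast
  then show False using x d_tri_nonpos_iff[of x q] unfolding Sigma_R_def by auto
qed

text \<open>The zero set of h is its lower graph over H0: every point decomposes uniquely
  as y + c * ones with y in H0, and moving to the level 0 fixes c = - h y.\<close>
lemma zero_set_eq_lower_graph:
  "{x. h_tri L x = 0} = {y - h_tri L y *\<^sub>R ones | y. y \<in> H0}"
proof
  show "{x. h_tri L x = 0} \<subseteq> {y - h_tri L y *\<^sub>R ones | y. y \<in> H0}"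
  proof
    fix z assume z: "z \<in> {x. h_tri L x = 0}"
    define s where "s = (\<Sum>i\<in>UNIV. z$i) / CARD('n)"
    define y where "y = z + (- s) *\<^sub>R ones"
    have "y \<in> H0" unfolding H0_def y_def s_def ones_def by (simp add: sum_subtractf)
    moreover have "h_tri L y = - s" using h_tri_shift[of z "- s"] z unfolding y_def by simp
    then have "z = y - h_tri L y *\<^sub>R ones" unfolding y_def by simp
    ultimately show "z \<in> {y - h_tri L y *\<^sub>R ones | y. y \<in> H0}" by blast
  qed
  show "{y - h_tri L y *\<^sub>R ones | y. y \<in> H0} \<subseteq> {x. h_tri L x = 0}"
    using h_tri_shift[of _ "- h_tri L _"] by auto
qed

end

theorem mainTheorem10:
  fixes L :: "(real^'n) set"
  assumes "CARD('n) \<ge> 2"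
    and "sublattice_A L"
    and "dim L = CARD('n) - 1"
  shows "frontier (Sigma_c L) = {y - h_tri L y *\<^sub>R (\<chi> i. 1) | y. y \<in> H0}"
proof -
  interpret subset_of_H0 L
    using assms(2) unfolding sublattice_A_def A_lat_def by unfold_locales auto
  have "frontier (Sigma_c L) = {x. h_tri L x = 0}"
    unfolding Sigma_c_def
    by (rule frontier_closure_squeezed[OF h_tri_continuous h_tri_shift
          Sigma_R_contains_pos Sigma_R_within_nonneg])
  then show ?thesis using zero_set_eq_lower_graph by (simp add: ones_def)
qed

end
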